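(* Let $\widetilde{E(2)}$ be as described in the context, let $K$ be a real number with $K\neq 0$ and $|K|<1$, let $b:\mathbb{R}\to\mathbb{R}$ be the solution of $$b'(v)=\sqrt{\lambda_1^2-K\left(\lambda_1^2\cos^2 b(v)+\lambda_2^2\sin^2 b(v)\right)},\qquad b(0)=0,$$ and let $x_3:\mathbb{R}\to\mathbb{R}$ be the solution of $x_3'(v)=\dfrac{\lambda_1\lambda_2K}{\lambda_1+b'(v)}$, $x_3(0)=0$. Then the mapping $X:\mathbb{C}\to\widetilde{E(2)}$, $X(u+iv)=(x_1,x_2,x_3)$ with $$x_1(u+iv)=\frac{1}{\lambda_1^2\lambda_2}\left(\frac{1}{\lambda_1}\cos x_3(v)\sin b(v)+\frac{1}{\lambda_2}\sin x_3(v)\cos b(v)\right)x_3'(v)\sinh(-\lambda_1u),$$ $$x_2(u+iv)=\frac{1}{\lambda_1^2\lambda_2}\left(\frac{1}{\lambda_1}\sin x_3(v)\sin b(v)-\frac{1}{\lambda_2}\cos x_3(v)\cos b(v)\right)x_3'(v)\sinh(-\lambda_1u),$$ $$x_3(u+iv)=x_3(v),$$ is a conformal minimal immersion from $\mathbb{C}$ into $\widetilde{E(2)}$ whose Gauss map (for a suitable choice of unit normal) is $g(u+iv)=e^{-\lambda_1u}e^{ib(v)}$.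
   Context: $\widetilde{E(2)}$ is $\mathbb{R}^3$ with coordinates $(x_1,x_2,x_3)$ and group law $(a_1,b_1,c_1)*(a_2,b_2,c_2)=(a_1+a_2\cos c_1-b_2\sin c_1,\ b_1+a_2\sin c_1+b_2\cos c_1,\ c_1+c_2)$, endowed with the left-invariant Riemannian metric $\lambda_1^2(\cos x_3\,dx_1+\sin x_3\,dx_2)^2+\lambda_2^2(-\sin x_3\,dx_1+\cos x_3\,dx_2)^2+\frac{1}{\lambda_1^2\lambda_2^2}dx_3^2$, where either $\lambda_1>\lambda_2>0$ or $\lambda_1=\lambda_2=1$. The left-invariant orthonormal frame is $E_1=\frac{1}{\lambda_1}(\cos x_3\,\partial_{x_1}+\sin x_3\,\partial_{x_2})$, $E_2=\frac{1}{\lambda_2}(-\sin x_3\,\partial_{x_1}+\cos x_3\,\partial_{x_2})$, $E_3=\lambda_1\lambda_2\,\partial_{x_3}$. For an immersed surface with unit normal $N=N_1E_1+N_2E_2+N_3E_3$, its Gauss map is $g=\frac{N_1+iN_2}{1+N_3}\in\mathbb{C}\cup\{\infty\}$ (stereographic projection from the south pole of the left-invariant Gauss map). Points of $\mathbb{C}$ are written $z=u+iv$. *)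

theory Defs
  imports "HOL-Analysis.Analysis"
begin

section \<open>The Riemannian manifold E(2)~ = R^3 with the left-invariant metric\<close>

text \<open>Points and coordinate tangent vectors of R^3 are elements of real^3;
  component k is the coefficient of the coordinate field d/dx_k.
  Parameters l1, l2 are lambda_1, lambda_2.\<close>

definition theta1 :: "real \<Rightarrow> real^3 \<Rightarrow> real" where
  "theta1 x3 v = cos x3 * v$1 + sin x3 * v$2"

definition theta2 :: "real \<Rightarrow> real^3 \<Rightarrow> real" where
  "theta2 x3 v = - sin x3 * v$1 + cos x3 * v$2"

definition ginner :: "real \<Rightarrow> real \<Rightarrow> real^3 \<Rightarrow> real^3 \<Rightarrow> real^3 \<Rightarrow> real" where
  "ginner l1 l2 p v w =
     l1^2 * theta1 (p$3) v * theta1 (p$3) w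
   + l2^2 * theta2 (p$3) v * theta2 (p$3) w
   + (1 / (l1^2 * l2^2)) * (v$3) * (w$3)"

definition gmat :: "real \<Rightarrow> real \<Rightarrow> real^3 \<Rightarrow> real^3^3" where
  "gmat l1 l2 p = (\<chi> i j. ginner l1 l2 p (axis i 1) (axis j 1))"

definition dgmat :: "real \<Rightarrow> real \<Rightarrow> 3 \<Rightarrow> 3 \<Rightarrow> 3 \<Rightarrow> real^3 \<Rightarrow> real" where
  "dgmat l1 l2 a b c p = deriv (\<lambda>t. gmat l1 l2 (p + t *\<^sub>R axis c 1) $ a $ b) 0"

definition christoffel :: "real \<Rightarrow> real \<Rightarrow> 3 \<Rightarrow> 3 \<Rightarrow> 3 \<Rightarrow> real^3 \<Rightarrow> real" where
  "christoffel l1 l2 k i j p =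
     (1/2) * (\<Sum>l\<in>UNIV. matrix_inv (gmat l1 l2 p) $ k $ l *
        (dgmat l1 l2 j l i p + dgmat l1 l2 i l j p - dgmat l1 l2 i j l p))"

definition frameE :: "real \<Rightarrow> real \<Rightarrow> 3 \<Rightarrow> real^3 \<Rightarrow> real^3" where
  "frameE l1 l2 i p =
     (if i = 1 then (1 / l1) *\<^sub>R vector [cos (p$3), sin (p$3), 0]
      else if i = 2 then (1 / l2) *\<^sub>R vector [- sin (p$3), cos (p$3), 0]
      else vector [0, 0, l1 * l2])"

text \<open>Partial derivative of f in direction w (w = 1: d/du, w = i: d/dv).\<close>
definition pd :: "(complex \<Rightarrow> 'a::real_normed_vector) \<Rightarrow> complex \<Rightarrow> complex \<Rightarrow> 'a" where
  "pd f w z = vector_derivative (\<lambda>t. f (z + of_real t * w)) (at 0)"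

fun Ck :: "nat \<Rightarrow> (complex \<Rightarrow> 'a::real_normed_vector) \<Rightarrow> bool" where
  "Ck 0 f = continuous_on UNIV f"
| "Ck (Suc n) f = ((\<forall>z. f differentiable (at z)) \<and> Ck n (pd f 1) \<and> Ck n (pd f \<i>))"

definition smooth_map :: "(complex \<Rightarrow> 'a::real_normed_vector) \<Rightarrow> bool" where
  "smooth_map f \<longleftrightarrow> (\<forall>n. Ck n f)"

definition immersion :: "(complex \<Rightarrow> real^3) \<Rightarrow> bool" where
  "immersion X \<longleftrightarrow> smooth_map X \<and>
     (\<forall>z. \<exists>D. (X has_derivative D) (at z) \<and> inj D)"

definition fff :: "real \<Rightarrow> real \<Rightarrow> (complex \<Rightarrow> real^3) \<Rightarrow> complex \<Rightarrow> complex \<Rightarrow> complex \<Rightarrow> real" where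
  "fff l1 l2 X a b z = ginner l1 l2 (X z) (pd X a z) (pd X b z)"

definition conformal :: "real \<Rightarrow> real \<Rightarrow> (complex \<Rightarrow> real^3) \<Rightarrow> bool" where
  "conformal l1 l2 X \<longleftrightarrow>
     (\<forall>z. fff l1 l2 X 1 1 z = fff l1 l2 X \<i> \<i> z \<and> fff l1 l2 X 1 \<i> z = 0)"

definition fffinv :: "real \<Rightarrow> real \<Rightarrow> (complex \<Rightarrow> real^3) \<Rightarrow> complex \<Rightarrow> complex \<Rightarrow> complex \<Rightarrow> real" where
  "fffinv l1 l2 X a b z =
     (let E = fff l1 l2 X 1 1 z; F = fff l1 l2 X 1 \<i> z; G = fff l1 l2 X \<i> \<i> z;
          d = E * G - F^2
      in if a = 1 \<and> b = 1 then G / d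
         else if a = \<i> \<and> b = \<i> then E / d
         else - F / d)"

definition covd :: "real \<Rightarrow> real \<Rightarrow> (complex \<Rightarrow> real^3) \<Rightarrow> complex \<Rightarrow> complex \<Rightarrow> complex \<Rightarrow> real^3" where
  "covd l1 l2 X a b z =
     (\<chi> k. pd (pd X b) a z $ k +
        (\<Sum>i\<in>UNIV. \<Sum>j\<in>UNIV. christoffel l1 l2 k i j (X z) * pd X a z $ i * pd X b z $ j))"

definition normal_part :: "real \<Rightarrow> real \<Rightarrow> (complex \<Rightarrow> real^3) \<Rightarrow> complex \<Rightarrow> real^3 \<Rightarrow> real^3" where
  "normal_part l1 l2 X z v =
     v - (\<Sum>a\<in>{1, \<i>}. \<Sum>b\<in>{1, \<i>}.
            (fffinv l1 l2 X a b z * ginner l1 l2 (X z) v (pd X a z)) *\<^sub>R pd X b z)"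

definition mean_curv_vec :: "real \<Rightarrow> real \<Rightarrow> (complex \<Rightarrow> real^3) \<Rightarrow> complex \<Rightarrow> real^3" where
  "mean_curv_vec l1 l2 X z =
     (1/2) *\<^sub>R (\<Sum>a\<in>{1, \<i>}. \<Sum>b\<in>{1, \<i>}.
        fffinv l1 l2 X a b z *\<^sub>R normal_part l1 l2 X z (covd l1 l2 X a b z))"

definition minimal :: "real \<Rightarrow> real \<Rightarrow> (complex \<Rightarrow> real^3) \<Rightarrow> bool" where
  "minimal l1 l2 X \<longleftrightarrow> (\<forall>z. mean_curv_vec l1 l2 X z = 0)"

definition conformal_minimal_immersion :: "real \<Rightarrow> real \<Rightarrow> (complex \<Rightarrow> real^3) \<Rightarrow> bool" where
  "conformal_minimal_immersion l1 l2 X \<longleftrightarrow>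
     immersion X \<and> conformal l1 l2 X \<and> minimal l1 l2 X"

definition unit_normal :: "real \<Rightarrow> real \<Rightarrow> (complex \<Rightarrow> real^3) \<Rightarrow> (complex \<Rightarrow> real^3) \<Rightarrow> bool" where
  "unit_normal l1 l2 X N \<longleftrightarrow> continuous_on UNIV N \<and>
     (\<forall>z. ginner l1 l2 (X z) (N z) (N z) = 1 \<and>
          ginner l1 l2 (X z) (N z) (pd X 1 z) = 0 \<and>
          ginner l1 l2 (X z) (N z) (pd X \<i> z) = 0)"

definition normal_comp :: "real \<Rightarrow> real \<Rightarrow> (complex \<Rightarrow> real^3) \<Rightarrow> (complex \<Rightarrow> real^3) \<Rightarrow> 3 \<Rightarrow> complex \<Rightarrow> real" where
  "normal_comp l1 l2 X N i z = ginner l1 l2 (X z) (N z) (frameE l1 l2 i (X z))"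

definition gauss_map :: "real \<Rightarrow> real \<Rightarrow> (complex \<Rightarrow> real^3) \<Rightarrow> (complex \<Rightarrow> real^3) \<Rightarrow> complex \<Rightarrow> complex" where
  "gauss_map l1 l2 X N z =
     Complex (normal_comp l1 l2 X N 1 z) (normal_comp l1 l2 X N 2 z)
       / of_real (1 + normal_comp l1 l2 X N 3 z)"

definition bprime :: "real \<Rightarrow> real \<Rightarrow> real \<Rightarrow> (real \<Rightarrow> real) \<Rightarrow> real \<Rightarrow> real" where
  "bprime l1 l2 K b v = sqrt (l1^2 - K * (l1^2 * (cos (b v))^2 + l2^2 * (sin (b v))^2))"

definition x3prime :: "real \<Rightarrow> real \<Rightarrow> real \<Rightarrow> (real \<Rightarrow> real) \<Rightarrow> real \<Rightarrow> real" where
  "x3prime l1 l2 K b v = l1 * l2 * K / (l1 + bprime l1 l2 K b v)"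

definition surfX :: "real \<Rightarrow> real \<Rightarrow> real \<Rightarrow> (real \<Rightarrow> real) \<Rightarrow> (real \<Rightarrow> real) \<Rightarrow> complex \<Rightarrow> real^3" where
  "surfX l1 l2 K b x3 z = (let u = Re z; v = Im z in
     vector [
       1 / (l1^2 * l2) * ((1/l1) * cos (x3 v) * sin (b v) + (1/l2) * sin (x3 v) * cos (b v))
         * x3prime l1 l2 K b v * sinh (- l1 * u),
       1 / (l1^2 * l2) * ((1/l1) * sin (x3 v) * sin (b v) - (1/l2) * cos (x3 v) * cos (b v))
         * x3prime l1 l2 K b v * sinh (- l1 * u),
       x3 v])"

end

theory Submission
  imports Defs
begin

text \<open>Measure the horizontal components of vectors at a point with \<open>x3 = t\<close> in the coframe
  \<open>theta1 t, theta2 t\<close>. In these coordinates the metric is the constant diagonal form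
  \<open>diag (l1\<^sup>2, l2\<^sup>2, 1 / (l1\<^sup>2 l2\<^sup>2))\<close> and the Christoffel symbols are constant, so everything is
  explicit. The surface is \<open>sinh (- l1 u)\<close> times a horizontal curve in these coordinates, lifted to
  height \<open>x3(v)\<close>. Conformality follows from \<open>cosh\<^sup>2 = sinh\<^sup>2 + 1\<close>; for a conformal map the mean
  curvature vector is a multiple of the normal part of the tension field
  \<open>X_uu + X_vv + \<Gamma>(X_u, X_u) + \<Gamma>(X_v, X_v)\<close>, which vanishes identically once the ODE for \<open>b\<close> is
  written as \<open>x3' (l1\<^sup>2 cos\<^sup>2 b + l2\<^sup>2 sin\<^sup>2 b) = l1 l2 (l1 - b')\<close>. The unit normal has frame
  components \<open>(cos b, sin b, - sinh (- l1 u)) / cosh (- l1 u)\<close>, whose stereographic projection is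
  \<open>exp (- l1 u) exp (i b)\<close>. Smoothness holds because all coordinate functions lie in the algebra
  generated by finitely many functions, and this algebra is closed under partial differentiation.\<close>

section \<open>Frame coordinates\<close>

text \<open>At a point with third coordinate \<open>t\<close>, \<open>frame_vec t a b c\<close> has components
  \<open>l1 a, l2 b, c / (l1 l2)\<close> in the orthonormal frame \<open>E\<^sub>1, E\<^sub>2, E\<^sub>3\<close>.\<close>

definition frame_vec :: "real \<Rightarrow> real \<Rightarrow> real \<Rightarrow> real \<Rightarrow> real^3" where
  "frame_vec t a b c = vector [cos t * a - sin t * b, sin t * a + cos t * b, c]"

lemma frame_vec_nth [simp]:
  "frame_vec t a b c $ 1 = cos t * a - sin t * b"
  "frame_vec t a b c $ 2 = sin t * a + cos t * b"
  "frame_vec t a b c $ 3 = c"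
  by (simp_all add: frame_vec_def)

lemma theta1_frame_vec [simp]: "theta1 t (frame_vec t a b c) = a"
  unfolding theta1_def frame_vec_nth using sin_cos_squared_add[of t] by algebra

lemma theta2_frame_vec [simp]: "theta2 t (frame_vec t a b c) = b"
  unfolding theta2_def frame_vec_nth using sin_cos_squared_add[of t] by algebra

lemma frame_vec_theta: "frame_vec t (theta1 t v) (theta2 t v) (v $ 3) = v"
proof -
  have "sin t ^ 2 + cos t ^ 2 = 1" by simp
  then have "frame_vec t (theta1 t v) (theta2 t v) (v $ 3) $ 1 = v $ 1"
    "frame_vec t (theta1 t v) (theta2 t v) (v $ 3) $ 2 = v $ 2"
    by (simp_all add: theta1_def theta2_def; algebra)+
  then show ?thesis by (simp add: vec_eq_iff forall_3)
qed

lemma frame_vec_eq_iff: "frame_vec t a b c = frame_vec t a' b' c' \<longleftrightarrow> a = a' \<and> b = b' \<and> c = c'"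
  by (metis theta1_frame_vec theta2_frame_vec frame_vec_nth(3))

lemma frame_vec_add: "frame_vec t a b c + frame_vec t a' b' c' = frame_vec t (a + a') (b + b') (c + c')"
  by (simp add: vec_eq_iff forall_3 algebra_simps)

lemma frame_vec_scaleR: "r *\<^sub>R frame_vec t a b c = frame_vec t (r * a) (r * b) (r * c)"
  by (simp add: vec_eq_iff forall_3 algebra_simps)

lemma frame_vec_zero [simp]: "frame_vec t 0 0 0 = 0"
  by (simp add: vec_eq_iff forall_3)

lemma frame_vec_eq_sum:
  "frame_vec t a b c = (cos t * a - sin t * b) *\<^sub>R axis 1 1 + (sin t * a + cos t * b) *\<^sub>R axis 2 1
     + c *\<^sub>R axis 3 1"
  by (simp add: vec_eq_iff forall_3 axis_def)

lemma theta1_add: "theta1 t (x + y) = theta1 t x + theta1 t y"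
  by (simp add: theta1_def algebra_simps)

lemma theta2_add: "theta2 t (x + y) = theta2 t x + theta2 t y"
  by (simp add: theta2_def algebra_simps)

lemma theta1_scaleR: "theta1 t (r *\<^sub>R x) = r * theta1 t x"
  by (simp add: theta1_def algebra_simps)

lemma theta2_scaleR: "theta2 t (r *\<^sub>R x) = r * theta2 t x"
  by (simp add: theta2_def algebra_simps)

lemma ginner_frame_vec:
  "p $ 3 = t \<Longrightarrow> ginner l1 l2 p (frame_vec t a b c) (frame_vec t a' b' c') =
     l1^2 * a * a' + l2^2 * b * b' + c * c' / (l1^2 * l2^2)"
  by (simp add: ginner_def)

lemma ginner_add_left: "ginner l1 l2 p (v + w) x = ginner l1 l2 p v x + ginner l1 l2 p w x"
  by (simp add: ginner_def theta1_add theta2_add algebra_simps add_divide_distrib)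

lemma ginner_zero_left: "ginner l1 l2 p 0 x = 0"
  by (simp add: ginner_def theta1_def theta2_def)

lemma frameE_eq_frame_vec:
  "frameE l1 l2 1 p = frame_vec (p$3) (1/l1) 0 0"
  "frameE l1 l2 2 p = frame_vec (p$3) 0 (1/l2) 0"
  "frameE l1 l2 3 p = frame_vec (p$3) 0 0 (l1 * l2)"
  by (simp_all add: frameE_def vec_eq_iff forall_3)

lemma has_derivative_frame_vec:
  assumes "(t has_derivative t') (at x)" "(a has_derivative a') (at x)"
    "(b has_derivative b') (at x)" "(c has_derivative c') (at x)"
  shows "((\<lambda>y. frame_vec (t y) (a y) (b y) (c y)) has_derivative
     (\<lambda>h. frame_vec (t x) (a' h - t' h * b x) (b' h + t' h * a x) (c' h))) (at x)"
  unfolding frame_vec_eq_sum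
  by (rule has_derivative_eq_rhs, (rule derivative_intros assms)+)
     (simp add: fun_eq_iff vec_eq_iff forall_3 axis_def algebra_simps)

section \<open>Christoffel symbols\<close>

lemma axis3_simps [simp]:
  "theta1 t (axis 1 1) = cos t" "theta1 t (axis 2 1) = sin t" "theta1 t (axis 3 1) = 0"
  "theta2 t (axis 1 1) = - sin t" "theta2 t (axis 2 1) = cos t" "theta2 t (axis 3 1) = 0"
  "(axis 1 1 :: real^3) $ 1 = 1" "(axis 1 1 :: real^3) $ 2 = 0" "(axis 1 1 :: real^3) $ 3 = 0"
  "(axis 2 1 :: real^3) $ 1 = 0" "(axis 2 1 :: real^3) $ 2 = 1" "(axis 2 1 :: real^3) $ 3 = 0"
  "(axis 3 1 :: real^3) $ 1 = 0" "(axis 3 1 :: real^3) $ 2 = 0" "(axis 3 1 :: real^3) $ 3 = 1"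
  by (simp_all add: theta1_def theta2_def axis_def)

definition gmat_inv :: "real \<Rightarrow> real \<Rightarrow> real \<Rightarrow> real^3^3" where
  "gmat_inv l1 l2 t = (\<chi> i j. (1/l1^2) * theta1 t (axis i 1) * theta1 t (axis j 1)
     + (1/l2^2) * theta2 t (axis i 1) * theta2 t (axis j 1)
     + (l1^2 * l2^2) * (axis i 1 :: real^3) $ 3 * (axis j 1 :: real^3) $ 3)"

lemma gmat_entry: "gmat l1 l2 p $ i $ j = ginner l1 l2 p (axis i 1) (axis j 1)"
  by (simp add: gmat_def)

lemma gmat_mult_gmat_inv:
  assumes "l1 \<noteq> 0" "l2 \<noteq> 0"
  shows "gmat l1 l2 p ** gmat_inv l1 l2 (p$3) = mat 1" "gmat_inv l1 l2 (p$3) ** gmat l1 l2 p = mat 1"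
  using assms sin_cos_squared_add[of "p$3"]
  unfolding matrix_matrix_mult_def mat_def vec_eq_iff forall_3
  by (simp_all add: sum_3 gmat_entry ginner_def gmat_inv_def field_simps; algebra)+

lemma matrix_inv_eqI:
  fixes A :: "'a::comm_semiring_1^'n^'n"
  assumes "A ** B = mat 1" "B ** A = mat 1"
  shows "matrix_inv A = B"
  unfolding matrix_inv_def
proof (rule some_equality)
  show "A ** B = mat 1 \<and> B ** A = mat 1" using assms by simp
next
  fix C assume C: "A ** C = mat 1 \<and> C ** A = mat 1"
  then have "C = (B ** A) ** C" by (simp add: assms)
  also have "\<dots> = B" by (simp add: matrix_mul_assoc[symmetric] C)
  finally show "C = B" .
qed

lemma matrix_inv_gmat:
  "l1 \<noteq> 0 \<Longrightarrow> l2 \<noteq> 0 \<Longrightarrow> matrix_inv (gmat l1 l2 p) = gmat_inv l1 l2 (p$3)"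
  using gmat_mult_gmat_inv by (blast intro: matrix_inv_eqI)

text \<open>The metric depends on a point only through its third coordinate \<open>t\<close>; \<open>dgform\<close> is its
  derivative in \<open>t\<close>.\<close>

definition gform :: "real \<Rightarrow> real \<Rightarrow> real \<Rightarrow> real^3 \<Rightarrow> real^3 \<Rightarrow> real" where
  "gform l1 l2 t v w = l1^2 * theta1 t v * theta1 t w + l2^2 * theta2 t v * theta2 t w
     + (1 / (l1^2 * l2^2)) * (v$3) * (w$3)"

definition dgform :: "real \<Rightarrow> real \<Rightarrow> real \<Rightarrow> real^3 \<Rightarrow> real^3 \<Rightarrow> real" where
  "dgform l1 l2 t v w = (l1^2 - l2^2) * (theta1 t v * theta2 t w + theta2 t v * theta1 t w)"

lemma ginner_eq_gform: "ginner l1 l2 p v w = gform l1 l2 (p$3) v w"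
  by (simp add: ginner_def gform_def)

lemma gform_deriv: "DERIV (\<lambda>t. gform l1 l2 t v w) t :> dgform l1 l2 t v w"
  unfolding gform_def dgform_def theta1_def theta2_def
  by (rule DERIV_cong, (rule derivative_intros)+) (simp add: algebra_simps)

lemma dgmat_eq: "dgmat l1 l2 a b c p = dgform l1 l2 (p$3) (axis a 1) (axis b 1) * (axis c 1 :: real^3) $ 3"
proof -
  let ?e = "(axis c 1 :: real^3) $ 3"
  have "DERIV (\<lambda>h. p$3 + h * ?e) 0 :> ?e"
    by (auto intro!: derivative_eq_intros)
  from DERIV_chain2[OF gform_deriv this]
  have "DERIV (\<lambda>h. gmat l1 l2 (p + h *\<^sub>R axis c 1) $ a $ b) 0 :>
          dgform l1 l2 (p$3) (axis a 1) (axis b 1) * ?e"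
    by (simp add: gmat_entry ginner_eq_gform)
  then show ?thesis unfolding dgmat_def by (rule DERIV_imp_deriv)
qed

definition christoffel_contract :: "real \<Rightarrow> real \<Rightarrow> real^3 \<Rightarrow> real^3 \<Rightarrow> real^3 \<Rightarrow> real^3" where
  "christoffel_contract l1 l2 p V W =
     (\<chi> k. \<Sum>i\<in>UNIV. \<Sum>j\<in>UNIV. christoffel l1 l2 k i j p * V $ i * W $ j)"

lemma covd_eq:
  "covd l1 l2 X a c z = pd (pd X c) a z + christoffel_contract l1 l2 (X z) (pd X a z) (pd X c z)"
  by (simp add: covd_def christoffel_contract_def vec_eq_iff)

lemma double_sum_mult_sum_swap:
  fixes F :: "'i \<Rightarrow> 'j \<Rightarrow> 'l \<Rightarrow> real"
  shows "(\<Sum>i\<in>A. \<Sum>j\<in>B. (c * (\<Sum>l\<in>C. F i j l)) * V i * W j)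
       = c * (\<Sum>l\<in>C. \<Sum>i\<in>A. \<Sum>j\<in>B. F i j l * V i * W j)"
proof -
  have "(\<Sum>i\<in>A. \<Sum>j\<in>B. (c * (\<Sum>l\<in>C. F i j l)) * V i * W j)
      = (\<Sum>i\<in>A. \<Sum>j\<in>B. \<Sum>l\<in>C. c * (F i j l * V i * W j))"
    by (simp add: sum_distrib_left sum_distrib_right mult.assoc)
  also have "\<dots> = (\<Sum>i\<in>A. \<Sum>l\<in>C. \<Sum>j\<in>B. c * (F i j l * V i * W j))"
    by (rule sum.cong[OF refl], rule sum.swap)
  also have "\<dots> = (\<Sum>l\<in>C. \<Sum>i\<in>A. \<Sum>j\<in>B. c * (F i j l * V i * W j))"
    by (rule sum.swap)
  also have "\<dots> = c * (\<Sum>l\<in>C. \<Sum>i\<in>A. \<Sum>j\<in>B. F i j l * V i * W j)"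
    by (simp add: sum_distrib_left)
  finally show ?thesis .
qed

text \<open>Twice the Christoffel symbols of the first kind, contracted with \<open>V\<close> and \<open>W\<close>.\<close>

definition christoffel1_contract :: "real \<Rightarrow> real \<Rightarrow> real \<Rightarrow> real^3 \<Rightarrow> real^3 \<Rightarrow> real^3" where
  "christoffel1_contract l1 l2 t V W =
     (\<chi> l. V$3 * dgform l1 l2 t W (axis l 1) + W$3 * dgform l1 l2 t V (axis l 1)
       - dgform l1 l2 t V W * (axis l 1 :: real^3) $ 3)"

lemma christoffel1_contract_nth:
  "(\<Sum>i\<in>UNIV. \<Sum>j\<in>UNIV. (dgform l1 l2 t (axis j 1) (axis l 1) * (axis i 1 :: real^3) $ 3
        + dgform l1 l2 t (axis i 1) (axis l 1) * (axis j 1 :: real^3) $ 3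
        - dgform l1 l2 t (axis i 1) (axis j 1) * (axis l 1 :: real^3) $ 3) * V $ i * W $ j)
   = christoffel1_contract l1 l2 t V W $ l"
  by (simp add: christoffel1_contract_def sum_3 dgform_def theta1_def theta2_def algebra_simps)

lemma christoffel_contract_eq:
  assumes "l1 \<noteq> 0" "l2 \<noteq> 0"
  shows "christoffel_contract l1 l2 p V W =
           (1/2) *\<^sub>R (gmat_inv l1 l2 (p$3) *v christoffel1_contract l1 l2 (p$3) V W)"
  unfolding vec_eq_iff
proof
  fix k :: 3
  let ?G = "gmat_inv l1 l2 (p$3)"
  have "christoffel_contract l1 l2 p V W $ k = (1/2) * (\<Sum>l\<in>UNIV. \<Sum>i\<in>UNIV. \<Sum>j\<in>UNIV.
       (?G $ k $ l * (dgform l1 l2 (p$3) (axis j 1) (axis l 1) * (axis i 1 :: real^3) $ 3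
      + dgform l1 l2 (p$3) (axis i 1) (axis l 1) * (axis j 1 :: real^3) $ 3
      - dgform l1 l2 (p$3) (axis i 1) (axis j 1) * (axis l 1 :: real^3) $ 3)) * V $ i * W $ j)"
    unfolding christoffel_contract_def christoffel_def matrix_inv_gmat[OF assms] dgmat_eq
      vec_lambda_beta
    by (rule double_sum_mult_sum_swap)
  also have "\<dots> = (1/2) * (\<Sum>l\<in>UNIV. ?G $ k $ l * christoffel1_contract l1 l2 (p$3) V W $ l)"
    by (simp add: christoffel1_contract_nth[symmetric] sum_distrib_left mult.assoc)
  finally show "christoffel_contract l1 l2 p V W $ k =
      ((1/2) *\<^sub>R (?G *v christoffel1_contract l1 l2 (p$3) V W)) $ k"
    by (simp add: matrix_vector_mult_def)
qed

lemma gmat_inv_frame: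
  assumes "l1 \<noteq> 0" "l2 \<noteq> 0"
  shows "theta1 t (gmat_inv l1 l2 t *v x) = theta1 t x / l1^2"
    "theta2 t (gmat_inv l1 l2 t *v x) = theta2 t x / l2^2"
    "(gmat_inv l1 l2 t *v x) $ 3 = l1^2 * l2^2 * x $ 3"
  using sin_cos_squared_add[of t]
  by (simp add: matrix_vector_mult_def sum_3 gmat_inv_def theta1_def theta2_def field_simps assms;
      algebra)+

lemma christoffel1_contract_frame:
  "theta1 t (christoffel1_contract l1 l2 t V W) = (l1^2 - l2^2) * (V$3 * theta2 t W + W$3 * theta2 t V)"
  "theta2 t (christoffel1_contract l1 l2 t V W) = (l1^2 - l2^2) * (V$3 * theta1 t W + W$3 * theta1 t V)"
  "christoffel1_contract l1 l2 t V W $ 3 =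
     - (l1^2 - l2^2) * (theta1 t V * theta2 t W + theta2 t V * theta1 t W)"
proof -
  have "sin t ^ 2 + cos t ^ 2 = 1" by simp
  then show "theta1 t (christoffel1_contract l1 l2 t V W) =
      (l1^2 - l2^2) * (V$3 * theta2 t W + W$3 * theta2 t V)"
    "theta2 t (christoffel1_contract l1 l2 t V W) =
      (l1^2 - l2^2) * (V$3 * theta1 t W + W$3 * theta1 t V)"
    unfolding christoffel1_contract_def theta1_def theta2_def dgform_def by (simp; algebra)+
  show "christoffel1_contract l1 l2 t V W $ 3 =
      - (l1^2 - l2^2) * (theta1 t V * theta2 t W + theta2 t V * theta1 t W)"
    unfolding christoffel1_contract_def theta1_def theta2_def dgform_def
    by (simp add: algebra_simps)
qed

text \<open>In the frame rotated by \<open>x3\<close> the Christoffel symbols are constant.\<close>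

lemma christoffel_contract_frame:
  assumes "l1 \<noteq> 0" "l2 \<noteq> 0" and t: "p$3 = t"
  shows "theta1 t (christoffel_contract l1 l2 p V W) =
           (l1^2 - l2^2) / (2 * l1^2) * (theta2 t V * W$3 + theta2 t W * V$3)"
    "theta2 t (christoffel_contract l1 l2 p V W) =
           (l1^2 - l2^2) / (2 * l2^2) * (theta1 t V * W$3 + theta1 t W * V$3)"
    "christoffel_contract l1 l2 p V W $ 3 =
           - (l1^2 * l2^2 * (l1^2 - l2^2) / 2) * (theta1 t V * theta2 t W + theta2 t V * theta1 t W)"
  unfolding christoffel_contract_eq[OF assms(1,2)] t
  by (simp_all add: theta1_scaleR theta2_scaleR gmat_inv_frame[OF assms(1,2)]
      christoffel1_contract_frame field_simps assms(1,2))

section \<open>Mean curvature of conformal maps\<close>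

lemma normal_part_add:
  "normal_part l1 l2 X z (v + w) = normal_part l1 l2 X z v + normal_part l1 l2 X z w"
  by (simp add: normal_part_def ginner_add_left distrib_left scaleR_add_left sum.distrib algebra_simps)

lemma normal_part_zero: "normal_part l1 l2 X z 0 = 0"
  by (simp add: normal_part_def ginner_zero_left)

lemma mean_curv_vec_eq_0_if_conformal:
  assumes "conformal l1 l2 X" "covd l1 l2 X 1 1 z + covd l1 l2 X \<i> \<i> z = 0"
  shows "mean_curv_vec l1 l2 X z = 0"
proof -
  have E: "fff l1 l2 X 1 1 z = fff l1 l2 X \<i> \<i> z" and F: "fff l1 l2 X 1 \<i> z = 0"
    using assms(1) by (auto simp: conformal_def)
  have i1: "(\<i>::complex) \<noteq> 1" by (simp add: complex_eq_iff)
  define q where "q = fffinv l1 l2 X 1 1 z"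
  have fffinv: "fffinv l1 l2 X \<i> \<i> z = q" "fffinv l1 l2 X 1 \<i> z = 0" "fffinv l1 l2 X \<i> 1 z = 0"
    using E F i1 by (simp_all add: fffinv_def q_def Let_def)
  have "mean_curv_vec l1 l2 X z = (1/2) *\<^sub>R (q *\<^sub>R normal_part l1 l2 X z (covd l1 l2 X 1 1 z)
         + q *\<^sub>R normal_part l1 l2 X z (covd l1 l2 X \<i> \<i> z))"
    unfolding mean_curv_vec_def using i1 by (simp add: fffinv q_def)
  also have "\<dots> = (1/2) *\<^sub>R (q *\<^sub>R normal_part l1 l2 X z (covd l1 l2 X 1 1 z + covd l1 l2 X \<i> \<i> z))"
    by (simp add: normal_part_add scaleR_add_right)
  also have "\<dots> = 0" using assms(2) by (simp add: normal_part_zero)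
  finally show ?thesis .
qed

section \<open>Partial derivatives and smoothness\<close>

lemma pd_eq_derivative:
  fixes f :: "complex \<Rightarrow> 'a::real_normed_vector"
  assumes "(f has_derivative D) (at z)"
  shows "pd f w z = D w"
proof -
  have "((\<lambda>t. z + of_real t * w) has_derivative (\<lambda>h. of_real h * w)) (at 0)"
    by (intro derivative_eq_intros) auto
  from has_derivative_compose[OF this] assms
  have "((\<lambda>t. f (z + of_real t * w)) has_derivative (\<lambda>h. D (of_real h * w))) (at 0)"
    by (simp add: o_def)
  moreover have "D (of_real h * w) = h *\<^sub>R D w" for h
    using has_derivative_linear[OF assms] by (simp add: scaleR_conv_of_real[symmetric] linear_scale)
  ultimately have "((\<lambda>t. f (z + of_real t * w)) has_vector_derivative D w) (at 0)"
    by (simp add: has_vector_derivative_def)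
  then show ?thesis unfolding pd_def by (rule vector_derivative_at)
qed

definition has_partials :: "(complex \<Rightarrow> real) \<Rightarrow> (complex \<Rightarrow> real) \<Rightarrow> (complex \<Rightarrow> real) \<Rightarrow> bool" where
  "has_partials f fu fv \<longleftrightarrow> (\<forall>z. (f has_derivative (\<lambda>w. Re w * fu z + Im w * fv z)) (at z))"

lemma has_partialsD: "has_partials f fu fv \<Longrightarrow> (f has_derivative (\<lambda>w. Re w * fu z + Im w * fv z)) (at z)"
  by (simp add: has_partials_def)

lemma has_partialsI:
  "(\<And>z. (f has_derivative (\<lambda>w. Re w * fu z + Im w * fv z)) (at z)) \<Longrightarrow> has_partials f fu fv"
  by (simp add: has_partials_def)

lemma has_partials_differentiable: "has_partials f fu fv \<Longrightarrow> f differentiable (at z)"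
  using has_partialsD differentiable_def by blast

lemma has_partials_continuous_on: "has_partials f fu fv \<Longrightarrow> continuous_on UNIV f"
  by (meson continuous_at_imp_continuous_on differentiable_imp_continuous_within
      has_partials_differentiable)

lemma has_partials_const: "has_partials (\<lambda>z. c) (\<lambda>z. 0) (\<lambda>z. 0)"
  by (rule has_partialsI) simp

lemma has_partials_add:
  assumes "has_partials f fu fv" "has_partials g gu gv"
  shows "has_partials (\<lambda>z. f z + g z) (\<lambda>z. fu z + gu z) (\<lambda>z. fv z + gv z)"
  by (rule has_partialsI,
      rule has_derivative_eq_rhs[OF has_derivative_add[OF assms[THEN has_partialsD]]])
     (simp add: fun_eq_iff algebra_simps)

lemma has_partials_mult:
  assumes "has_partials f fu fv" "has_partials g gu gv"
  shows "has_partials (\<lambda>z. f z * g z) (\<lambda>z. f z * gu z + fu z * g z) (\<lambda>z. f z * gv z + fv z * g z)"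
  by (rule has_partialsI,
      rule has_derivative_eq_rhs[OF has_derivative_mult[OF assms[THEN has_partialsD]]])
     (simp add: fun_eq_iff algebra_simps)

lemma has_partials_Re_comp:
  assumes "\<And>u. DERIV h u :> h' u"
  shows "has_partials (\<lambda>z. h (Re z)) (\<lambda>z. h' (Re z)) (\<lambda>z. 0)"
  by (rule has_partialsI, rule has_derivative_eq_rhs[OF DERIV_compose_FDERIV[OF assms
        has_derivative_Re[OF has_derivative_ident]]])
     (simp add: fun_eq_iff)

lemma has_partials_Im_comp:
  assumes "\<And>v. DERIV h v :> h' v"
  shows "has_partials (\<lambda>z. h (Im z)) (\<lambda>z. 0) (\<lambda>z. h' (Im z))"
  by (rule has_partialsI, rule has_derivative_eq_rhs[OF DERIV_compose_FDERIV[OF assms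
        has_derivative_Im[OF has_derivative_ident]]])
     (simp add: fun_eq_iff)

lemma has_derivative_frame_vec_partials:
  assumes "has_partials t tu tv" "has_partials a au av" "has_partials b bu bv" "has_partials c cu cv"
  shows "((\<lambda>z. frame_vec (t z) (a z) (b z) (c z)) has_derivative
    (\<lambda>w. Re w *\<^sub>R frame_vec (t z) (au z - tu z * b z) (bu z + tu z * a z) (cu z)
       + Im w *\<^sub>R frame_vec (t z) (av z - tv z * b z) (bv z + tv z * a z) (cv z))) (at z)"
  by (rule has_derivative_eq_rhs, rule has_derivative_frame_vec[OF assms[THEN has_partialsD]])
     (simp add: fun_eq_iff vec_eq_iff forall_3 algebra_simps)

inductive_set gen_algebra :: "(complex \<Rightarrow> real) set \<Rightarrow> (complex \<Rightarrow> real) set" for G where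
  gen: "f \<in> G \<Longrightarrow> f \<in> gen_algebra G"
| const: "(\<lambda>z. c) \<in> gen_algebra G"
| add: "f \<in> gen_algebra G \<Longrightarrow> g \<in> gen_algebra G \<Longrightarrow> (\<lambda>z. f z + g z) \<in> gen_algebra G"
| mult: "f \<in> gen_algebra G \<Longrightarrow> g \<in> gen_algebra G \<Longrightarrow> (\<lambda>z. f z * g z) \<in> gen_algebra G"

lemma gen_algebra_uminus:
  assumes "f \<in> gen_algebra G"
  shows "(\<lambda>z. - f z) \<in> gen_algebra G"
proof -
  have "(\<lambda>z. (-1) * f z) \<in> gen_algebra G" by (rule gen_algebra.mult[OF gen_algebra.const assms])
  then show ?thesis by simp
qed

lemma gen_algebra_diff:
  assumes "f \<in> gen_algebra G" "g \<in> gen_algebra G"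
  shows "(\<lambda>z. f z - g z) \<in> gen_algebra G"
proof -
  have "(\<lambda>z. f z + - g z) \<in> gen_algebra G"
    by (rule gen_algebra.add[OF assms(1) gen_algebra_uminus[OF assms(2)]])
  then show ?thesis by simp
qed

lemmas gen_algebra_intros =
  gen_algebra.const gen_algebra.add gen_algebra.mult gen_algebra_uminus gen_algebra_diff

definition partials_closed :: "(complex \<Rightarrow> real) set \<Rightarrow> bool" where
  "partials_closed G \<longleftrightarrow>
     (\<forall>g\<in>G. \<exists>gu gv. gu \<in> gen_algebra G \<and> gv \<in> gen_algebra G \<and> has_partials g gu gv)"

lemma partials_closed_Im_comp:
  assumes "\<And>v. DERIV h v :> h' v" "(\<lambda>z. h' (Im z)) \<in> gen_algebra G"
  shows "\<exists>gu gv. gu \<in> gen_algebra G \<and> gv \<in> gen_algebra G \<and> has_partials (\<lambda>z. h (Im z)) gu gv"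
proof (intro exI conjI)
  show "(\<lambda>z. 0) \<in> gen_algebra G" by (rule gen_algebra.const)
  show "has_partials (\<lambda>z. h (Im z)) (\<lambda>z. 0) (\<lambda>z. h' (Im z))" by (rule has_partials_Im_comp[OF assms(1)])
qed (fact assms(2))

lemma gen_algebra_has_partials:
  assumes "partials_closed G" "f \<in> gen_algebra G"
  shows "\<exists>fu fv. fu \<in> gen_algebra G \<and> fv \<in> gen_algebra G \<and> has_partials f fu fv"
  using assms(2)
proof induction
  case (gen f)
  then show ?case using assms(1) by (auto simp: partials_closed_def)
next
  case (const c)
  show ?case using has_partials_const gen_algebra.const by blast
next
  case (add f g)
  then obtain fu fv gu gv where f: "fu \<in> gen_algebra G" "fv \<in> gen_algebra G" "has_partials f fu fv"
    and g: "gu \<in> gen_algebra G" "gv \<in> gen_algebra G" "has_partials g gu gv" by blast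
  have "has_partials (\<lambda>z. f z + g z) (\<lambda>z. fu z + gu z) (\<lambda>z. fv z + gv z)"
    using f(3) g(3) by (rule has_partials_add)
  moreover have "(\<lambda>z. fu z + gu z) \<in> gen_algebra G" "(\<lambda>z. fv z + gv z) \<in> gen_algebra G"
    using f g by (simp_all add: gen_algebra.add)
  ultimately show ?case by blast
next
  case (mult f g)
  then obtain fu fv gu gv where f: "fu \<in> gen_algebra G" "fv \<in> gen_algebra G" "has_partials f fu fv"
    and g: "gu \<in> gen_algebra G" "gv \<in> gen_algebra G" "has_partials g gu gv" by blast
  have "has_partials (\<lambda>z. f z * g z) (\<lambda>z. f z * gu z + fu z * g z) (\<lambda>z. f z * gv z + fv z * g z)"
    using f(3) g(3) by (rule has_partials_mult)
  moreover have "(\<lambda>z. f z * gu z + fu z * g z) \<in> gen_algebra G"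
    "(\<lambda>z. f z * gv z + fv z * g z) \<in> gen_algebra G"
    using f g mult.hyps by (simp_all add: gen_algebra.add gen_algebra.mult)
  ultimately show ?case by blast
qed

lemma has_derivative_vec3:
  fixes F :: "complex \<Rightarrow> real^3"
  assumes "\<And>k. has_partials (\<lambda>z. F z $ k) (fu k) (fv k)"
  shows "(F has_derivative (\<lambda>w. \<chi> k. Re w * fu k z + Im w * fv k z)) (at z)"
proof -
  have F: "F = (\<lambda>z. F z $ 1 *\<^sub>R axis 1 1 + F z $ 2 *\<^sub>R axis 2 1 + F z $ 3 *\<^sub>R axis 3 1)"
    by (simp add: fun_eq_iff vec_eq_iff forall_3)
  show ?thesis
    by (subst F, rule has_derivative_eq_rhs,
        (rule has_derivative_add has_derivative_scaleR_left has_partialsD[OF assms])+)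
       (simp add: fun_eq_iff vec_eq_iff forall_3)
qed

lemma gen_algebra_smooth_map:
  assumes "partials_closed G" "\<And>k. (\<lambda>z. F z $ k) \<in> gen_algebra G"
  shows "smooth_map (F :: complex \<Rightarrow> real^3)"
  unfolding smooth_map_def
proof
  fix n show "Ck n F"
    using assms(2)
  proof (induction n arbitrary: F)
    case 0
    then have "\<forall>k. \<exists>fu fv. has_partials (\<lambda>z. F z $ k) fu fv"
      using gen_algebra_has_partials[OF assms(1)] by blast
    then obtain fu fv where "\<And>k. has_partials (\<lambda>z. F z $ k) (fu k) (fv k)" by metis
    from has_derivative_vec3[OF this] show ?case
      by (auto intro!: continuous_at_imp_continuous_on has_derivative_continuous)
  next
    case (Suc n)
    then have "\<forall>k. \<exists>fu fv. fu \<in> gen_algebra G \<and> fv \<in> gen_algebra G \<and> has_partials (\<lambda>z. F z $ k) fu fv"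
      using gen_algebra_has_partials[OF assms(1)] by blast
    then obtain fu fv where F: "\<And>k. has_partials (\<lambda>z. F z $ k) (fu k) (fv k)"
      and alg: "\<And>k. fu k \<in> gen_algebra G" "\<And>k. fv k \<in> gen_algebra G" by metis
    note D = has_derivative_vec3[OF F]
    have "(\<lambda>z. pd F 1 z $ k) = fu k" "(\<lambda>z. pd F \<i> z $ k) = fv k" for k
      by (simp_all add: pd_eq_derivative[OF D] fun_eq_iff)
    then have "Ck n (pd F 1)" "Ck n (pd F \<i>)"
      using Suc.IH alg by metis+
    moreover have "\<forall>z. F differentiable (at z)" using D differentiable_def by blast
    ultimately show ?case by simp
  qed
qed

section \<open>The surface\<close>

locale surf_data =
  fixes l1 l2 K :: real and b x3 :: "real \<Rightarrow> real"
  assumes lambdas: "(l1 > l2 \<and> l2 > 0) \<or> (l1 = 1 \<and> l2 = 1)"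
    and K_nonzero: "K \<noteq> 0" and K_abs_less_1: "\<bar>K\<bar> < 1"
    and b_has_deriv: "\<forall>v. (b has_real_derivative bprime l1 l2 K b v) (at v)"
    and x3_has_deriv: "\<forall>v. (x3 has_real_derivative x3prime l1 l2 K b v) (at v)"
begin

lemma l1_pos: "l1 > 0" and l2_pos: "l2 > 0" and l2_le_l1: "l2 \<le> l1"
  using lambdas by auto

lemma l1_nonzero: "l1 \<noteq> 0" and l2_nonzero: "l2 \<noteq> 0"
  using l1_pos l2_pos by auto

definition weight :: "real \<Rightarrow> real" where
  "weight t = l1^2 * (cos t)^2 + l2^2 * (sin t)^2"

lemma weight_nonneg: "0 \<le> weight t"
  by (simp add: weight_def)

lemma weight_le: "weight t \<le> l1^2"
proof -
  have "l2^2 \<le> l1^2" using l2_le_l1 l2_pos by (simp add: power_mono)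
  then have "weight t \<le> l1^2 * (cos t)^2 + l1^2 * (sin t)^2"
    unfolding weight_def by (simp add: mult_right_mono)
  also have "\<dots> = l1^2" by (simp flip: distrib_left)
  finally show ?thesis .
qed

lemma radicand_pos: "l1^2 - K * weight t > 0"
proof (cases "K > 0")
  case True
  then have "K * weight t \<le> K * l1^2" using weight_le by (simp add: mult_left_mono)
  also have "\<dots> < l1^2" using True K_abs_less_1 l1_pos by simp
  finally show ?thesis by simp
next
  case False
  then have "K * weight t \<le> 0" using weight_nonneg by (simp add: mult_nonpos_nonneg)
  moreover have "0 < l1^2" using l1_pos by simp
  ultimately show ?thesis by linarith
qed

definition bd :: "real \<Rightarrow> real" where "bd v = bprime l1 l2 K b v"
definition x3d :: "real \<Rightarrow> real" where "x3d v = x3prime l1 l2 K b v"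

lemma b_deriv: "DERIV b v :> bd v"
  using b_has_deriv by (simp add: bd_def)

lemma x3_deriv: "DERIV x3 v :> x3d v"
  using x3_has_deriv by (simp add: x3d_def)

lemma bd_eq: "bd v = sqrt (l1^2 - K * weight (b v))"
  by (simp add: bd_def bprime_def weight_def)

lemma bd_nonneg: "bd v \<ge> 0"
  using radicand_pos by (simp add: bd_eq less_imp_le)

lemma bd_square: "bd v ^ 2 = l1^2 - K * weight (b v)"
  using radicand_pos by (simp add: bd_eq less_imp_le)

lemma l1_plus_bd_pos: "l1 + bd v > 0"
  using bd_nonneg[of v] l1_pos by simp

lemma x3d_eq: "x3d v = l1 * l2 * K / (l1 + bd v)"
  by (simp add: x3d_def x3prime_def bd_def)

lemma x3d_nonzero: "x3d v \<noteq> 0"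
  using l1_plus_bd_pos[of v] K_nonzero l1_pos l2_pos by (simp add: x3d_eq)

lemma x3d_weight: "x3d v * weight (b v) = l1 * l2 * (l1 - bd v)"
proof -
  have d: "l1 + bd v \<noteq> 0" using l1_plus_bd_pos[of v] by simp
  have "x3d v * weight (b v) * (l1 + bd v) = l1 * l2 * (K * weight (b v))"
    using d by (simp add: x3d_eq)
  also have "\<dots> = l1 * l2 * (l1^2 - bd v^2)"
    by (simp add: bd_square)
  also have "\<dots> = l1 * l2 * (l1 - bd v) * (l1 + bd v)"
    by (simp add: algebra_simps power2_eq_square)
  finally show ?thesis using d by simp
qed

definition bdd :: "real \<Rightarrow> real" where
  "bdd v = K * (l1^2 - l2^2) * sin (b v) * cos (b v)"

definition x3dd :: "real \<Rightarrow> real" where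
  "x3dd v = (l2^2 - l1^2) * x3d v ^ 2 * sin (b v) * cos (b v) / (l1 * l2)"

lemma bd_deriv: "DERIV bd v :> bdd v"
proof -
  have "bd = (\<lambda>v. sqrt (l1^2 - K * weight (b v)))" by (simp add: bd_eq fun_eq_iff)
  moreover have "DERIV (\<lambda>v. sqrt (l1^2 - K * weight (b v))) v :> bdd v"
    using radicand_pos[of "b v"] bd_eq[of v]
    unfolding weight_def bdd_def
    by (auto intro!: derivative_eq_intros b_deriv simp: field_simps power2_eq_square)
  ultimately show ?thesis by simp
qed

lemma x3d_deriv: "DERIV x3d v :> x3dd v"
proof -
  have d: "l1 + bd v \<noteq> 0" using l1_plus_bd_pos[of v] by simp
  have "x3d = (\<lambda>v. l1 * l2 * K / (l1 + bd v))" by (simp add: x3d_eq fun_eq_iff)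
  moreover have "DERIV (\<lambda>v. l1 * l2 * K / (l1 + bd v)) v :> - (l1 * l2 * K * bdd v) / (l1 + bd v)^2"
    using d by (auto intro!: derivative_eq_intros bd_deriv simp: power2_eq_square)
  moreover have "- (l1 * l2 * K * bdd v) / (l1 + bd v)^2 = x3dd v"
    using d l1_nonzero l2_nonzero
    by (simp add: x3dd_def bdd_def x3d_eq power_divide field_simps; algebra)
  ultimately show ?thesis by simp
qed

text \<open>The surface is \<open>frame_vec x3 (sh p1) (sh p2) x3\<close> with \<open>sh = sinh (- l1 u)\<close>; \<open>sh q1\<close> and
  \<open>sh q2\<close> are the first two frame coordinates of its \<open>v\<close>-derivative.\<close>

definition p1 :: "real \<Rightarrow> real" where "p1 v = x3d v * sin (b v) / (l1^3 * l2)"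
definition p2 :: "real \<Rightarrow> real" where "p2 v = - x3d v * cos (b v) / (l1^2 * l2^2)"
definition q1 :: "real \<Rightarrow> real" where "q1 v = x3d v * cos (b v) / (l1^2 * l2)"
definition q2 :: "real \<Rightarrow> real" where "q2 v = x3d v * sin (b v) / (l1 * l2^2)"
definition q1d :: "real \<Rightarrow> real" where
  "q1d v = (x3dd v * cos (b v) - x3d v * bd v * sin (b v)) / (l1^2 * l2)"
definition q2d :: "real \<Rightarrow> real" where
  "q2d v = (x3dd v * sin (b v) + x3d v * bd v * cos (b v)) / (l1 * l2^2)"

lemma p1_deriv: "DERIV p1 v :> q1 v + x3d v * p2 v"
proof -
  have "DERIV p1 v :> (x3dd v * sin (b v) + x3d v * (cos (b v) * bd v)) / (l1^3 * l2)"
    unfolding p1_def[abs_def]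
    by (auto intro!: derivative_eq_intros x3d_deriv b_deriv simp: l1_nonzero l2_nonzero)
  moreover have "(x3dd v * sin (b v) + x3d v * (cos (b v) * bd v)) / (l1^3 * l2) = q1 v + x3d v * p2 v"
    using sin_cos_squared_add[of "b v"] x3d_weight[of v, unfolded weight_def] l1_nonzero l2_nonzero
    unfolding x3dd_def q1_def p2_def by (simp add: field_simps; algebra)
  ultimately show ?thesis by simp
qed

lemma p2_deriv: "DERIV p2 v :> q2 v - x3d v * p1 v"
proof -
  have "DERIV p2 v :> - (x3dd v * cos (b v) - x3d v * (sin (b v) * bd v)) / (l1^2 * l2^2)"
    unfolding p2_def[abs_def]
    by (auto intro!: derivative_eq_intros x3d_deriv b_deriv simp: l1_nonzero l2_nonzero field_simps)
  moreover have "- (x3dd v * cos (b v) - x3d v * (sin (b v) * bd v)) / (l1^2 * l2^2) = q2 v - x3d v * p1 v"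
    using sin_cos_squared_add[of "b v"] x3d_weight[of v, unfolded weight_def] l1_nonzero l2_nonzero
    unfolding x3dd_def q2_def p1_def by (simp add: field_simps; algebra)
  ultimately show ?thesis by simp
qed

lemma q1_deriv: "DERIV q1 v :> q1d v"
  unfolding q1_def[abs_def] q1d_def
  by (auto intro!: derivative_eq_intros x3d_deriv b_deriv simp: l1_nonzero l2_nonzero field_simps)

lemma q2_deriv: "DERIV q2 v :> q2d v"
  unfolding q2_def[abs_def] q2d_def
  by (auto intro!: derivative_eq_intros x3d_deriv b_deriv simp: l1_nonzero l2_nonzero field_simps)

definition sh :: "complex \<Rightarrow> real" where "sh z = sinh (- l1 * Re z)"
definition ch :: "complex \<Rightarrow> real" where "ch z = cosh (- l1 * Re z)"

lemma ch_square: "ch z ^ 2 = sh z ^ 2 + 1"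
  by (simp add: ch_def sh_def cosh_square_eq)

lemma ch_pos: "ch z > 0"
  by (simp add: ch_def)

lemma ch_nonzero: "ch z \<noteq> 0"
  using ch_pos[of z] by simp

lemma has_partials_sh: "has_partials sh (\<lambda>z. - l1 * ch z) (\<lambda>z. 0)"
  unfolding sh_def ch_def
  by (rule has_partials_Re_comp) (auto intro!: derivative_eq_intros)

lemma has_partials_ch: "has_partials ch (\<lambda>z. - l1 * sh z) (\<lambda>z. 0)"
  unfolding sh_def ch_def
  by (rule has_partials_Re_comp) (auto intro!: derivative_eq_intros)

lemma has_partials_sh_mult:
  assumes "\<And>v. DERIV f v :> f' v"
  shows "has_partials (\<lambda>z. sh z * f (Im z)) (\<lambda>z. - l1 * ch z * f (Im z)) (\<lambda>z. sh z * f' (Im z))"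
  using has_partials_mult[OF has_partials_sh has_partials_Im_comp[OF assms]] by simp

lemma has_partials_ch_mult:
  assumes "\<And>v. DERIV f v :> f' v"
  shows "has_partials (\<lambda>z. - l1 * ch z * f (Im z))
     (\<lambda>z. l1^2 * sh z * f (Im z)) (\<lambda>z. - l1 * ch z * f' (Im z))"
  using has_partials_mult[OF has_partials_mult[OF has_partials_const[of "- l1"] has_partials_ch]
      has_partials_Im_comp[OF assms]]
  by (simp add: power2_eq_square mult.assoc)

lemma has_partials_x3: "has_partials (\<lambda>z. x3 (Im z)) (\<lambda>z. 0) (\<lambda>z. x3d (Im z))"
  by (rule has_partials_Im_comp[OF x3_deriv])

lemma has_partials_x3d: "has_partials (\<lambda>z. x3d (Im z)) (\<lambda>z. 0) (\<lambda>z. x3dd (Im z))"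
  by (rule has_partials_Im_comp[OF x3d_deriv])

definition surf :: "complex \<Rightarrow> real^3" where
  "surf z = frame_vec (x3 (Im z)) (sh z * p1 (Im z)) (sh z * p2 (Im z)) (x3 (Im z))"
definition surf_u :: "complex \<Rightarrow> real^3" where
  "surf_u z = frame_vec (x3 (Im z)) (- l1 * ch z * p1 (Im z)) (- l1 * ch z * p2 (Im z)) 0"
definition surf_v :: "complex \<Rightarrow> real^3" where
  "surf_v z = frame_vec (x3 (Im z)) (sh z * q1 (Im z)) (sh z * q2 (Im z)) (x3d (Im z))"
definition surf_uu :: "complex \<Rightarrow> real^3" where
  "surf_uu z = frame_vec (x3 (Im z)) (l1^2 * sh z * p1 (Im z)) (l1^2 * sh z * p2 (Im z)) 0"
definition surf_uv :: "complex \<Rightarrow> real^3" where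
  "surf_uv z = frame_vec (x3 (Im z)) (- l1 * ch z * q1 (Im z)) (- l1 * ch z * q2 (Im z)) 0"
definition surf_vv :: "complex \<Rightarrow> real^3" where
  "surf_vv z = frame_vec (x3 (Im z)) (sh z * q1d (Im z) - x3d (Im z) * (sh z * q2 (Im z)))
     (sh z * q2d (Im z) + x3d (Im z) * (sh z * q1 (Im z))) (x3dd (Im z))"

lemma surfX_eq: "surfX l1 l2 K b x3 = surf"
proof
  fix z
  have "surfX l1 l2 K b x3 z $ k = surf z $ k" for k
    using exhaust_3[of k] l1_nonzero l2_nonzero
    by (auto simp: surfX_def Let_def surf_def p1_def p2_def sh_def x3d_def power3_eq_cube power2_eq_square)
       (simp_all add: field_simps)
  then show "surfX l1 l2 K b x3 z = surf z" by (simp add: vec_eq_iff)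
qed

lemma surf_nth3: "surf z $ 3 = x3 (Im z)"
  by (simp add: surf_def)

lemma surf_has_derivative: "(surf has_derivative (\<lambda>w. Re w *\<^sub>R surf_u z + Im w *\<^sub>R surf_v z)) (at z)"
  unfolding surf_def[abs_def]
  by (rule has_derivative_eq_rhs[OF has_derivative_frame_vec_partials[OF has_partials_x3
        has_partials_sh_mult[OF p1_deriv] has_partials_sh_mult[OF p2_deriv] has_partials_x3]])
     (simp add: surf_u_def surf_v_def algebra_simps)

lemma surf_u_has_derivative:
  "(surf_u has_derivative (\<lambda>w. Re w *\<^sub>R surf_uu z + Im w *\<^sub>R surf_uv z)) (at z)"
  unfolding surf_u_def[abs_def]
  by (rule has_derivative_eq_rhs[OF has_derivative_frame_vec_partials[OF has_partials_x3
        has_partials_ch_mult[OF p1_deriv] has_partials_ch_mult[OF p2_deriv] has_partials_const]])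
     (simp add: surf_uu_def surf_uv_def algebra_simps)

lemma surf_v_has_derivative:
  "(surf_v has_derivative (\<lambda>w. Re w *\<^sub>R surf_uv z + Im w *\<^sub>R surf_vv z)) (at z)"
  unfolding surf_v_def[abs_def]
  by (rule has_derivative_eq_rhs[OF has_derivative_frame_vec_partials[OF has_partials_x3
        has_partials_sh_mult[OF q1_deriv] has_partials_sh_mult[OF q2_deriv] has_partials_x3d]])
     (simp add: surf_uv_def surf_vv_def algebra_simps)

lemma pd_surf: "pd surf 1 = surf_u" "pd surf \<i> = surf_v"
  and pd_surf_u: "pd surf_u 1 = surf_uu"
  and pd_surf_v: "pd surf_v \<i> = surf_vv"
  by (simp_all add: fun_eq_iff pd_eq_derivative[OF surf_has_derivative]
      pd_eq_derivative[OF surf_u_has_derivative] pd_eq_derivative[OF surf_v_has_derivative])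

lemma fff_surf:
  "fff l1 l2 surf 1 1 z = l1^2 * (l1 * ch z * p1 (Im z))^2 + l2^2 * (l1 * ch z * p2 (Im z))^2"
  "fff l1 l2 surf \<i> \<i> z = l1^2 * (sh z * q1 (Im z))^2 + l2^2 * (sh z * q2 (Im z))^2
     + x3d (Im z)^2 / (l1^2 * l2^2)"
  "fff l1 l2 surf 1 \<i> z = - l1 * ch z * sh z * (l1^2 * p1 (Im z) * q1 (Im z) + l2^2 * p2 (Im z) * q2 (Im z))"
  unfolding fff_def pd_surf surf_u_def surf_v_def ginner_frame_vec[OF surf_nth3]
  by (simp_all add: power2_eq_square algebra_simps)

lemma conformal_surf: "conformal l1 l2 surf"
  unfolding conformal_def
proof (intro allI conjI)
  fix z
  show "fff l1 l2 surf 1 1 z = fff l1 l2 surf \<i> \<i> z"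
    unfolding fff_surf p1_def p2_def q1_def q2_def
    using ch_square[of z] sin_cos_squared_add[of "b (Im z)"] l1_nonzero l2_nonzero
    by (simp add: field_simps; algebra)
  show "fff l1 l2 surf 1 \<i> z = 0"
    unfolding fff_surf p1_def p2_def q1_def q2_def
    using l1_nonzero l2_nonzero by (simp add: field_simps; simp add: algebra_simps eval_nat_numeral)
qed

lemmas christoffel_contract_surf =
  christoffel_contract_frame[OF l1_nonzero l2_nonzero surf_nth3]

text \<open>Each frame coordinate of the tension field reduces to a polynomial identity modulo
  \<open>sin\<^sup>2 + cos\<^sup>2 = 1\<close>, \<open>cosh\<^sup>2 = sinh\<^sup>2 + 1\<close> and \<open>x3d_weight\<close>.\<close>

lemma tension_surf: "covd l1 l2 surf 1 1 z + covd l1 l2 surf \<i> \<i> z = 0"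
proof -
  define t where "t = x3 (Im z)"
  define T where "T = covd l1 l2 surf 1 1 z + covd l1 l2 surf \<i> \<i> z"
  have T: "T = surf_uu z + christoffel_contract l1 l2 (surf z) (surf_u z) (surf_u z)
      + (surf_vv z + christoffel_contract l1 l2 (surf z) (surf_v z) (surf_v z))"
    unfolding T_def covd_eq pd_surf pd_surf_u pd_surf_v ..
  note defs = surf_uu_def surf_vv_def surf_u_def surf_v_def
    p1_def p2_def q1_def q2_def q1d_def q2d_def x3dd_def
  note ids = sin_cos_squared_add[of "b (Im z)"] x3d_weight[of "Im z", unfolded weight_def]
    l1_nonzero l2_nonzero
  have "theta1 t T = 0"
    unfolding T t_def theta1_add christoffel_contract_surf using ids
    by (simp add: defs field_simps; algebra)
  moreover have "theta2 t T = 0"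
    unfolding T t_def theta2_add christoffel_contract_surf using ids
    by (simp add: defs field_simps; algebra)
  moreover have "T $ 3 = 0"
    unfolding T t_def vector_add_component christoffel_contract_surf
    using ch_square[of z] l1_nonzero l2_nonzero
    by (simp add: defs field_simps; algebra)
  ultimately have "T = frame_vec t 0 0 0"
    using frame_vec_theta[of t T] by simp
  then show ?thesis unfolding T_def by simp
qed

lemma minimal_surf: "minimal l1 l2 surf"
  unfolding minimal_def using mean_curv_vec_eq_0_if_conformal[OF conformal_surf tension_surf] by blast

definition generators :: "(complex \<Rightarrow> real) set" where
  "generators = {sh, ch, \<lambda>z. x3 (Im z), \<lambda>z. sin (x3 (Im z)), \<lambda>z. cos (x3 (Im z)),
     \<lambda>z. sin (b (Im z)), \<lambda>z. cos (b (Im z)), \<lambda>z. bd (Im z), \<lambda>z. 1 / (l1 + bd (Im z))}"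

lemma generators_in_gen_algebra:
  "sh \<in> gen_algebra generators" "ch \<in> gen_algebra generators"
  "(\<lambda>z. x3 (Im z)) \<in> gen_algebra generators"
  "(\<lambda>z. sin (x3 (Im z))) \<in> gen_algebra generators" "(\<lambda>z. cos (x3 (Im z))) \<in> gen_algebra generators"
  "(\<lambda>z. sin (b (Im z))) \<in> gen_algebra generators" "(\<lambda>z. cos (b (Im z))) \<in> gen_algebra generators"
  "(\<lambda>z. bd (Im z)) \<in> gen_algebra generators"
  "(\<lambda>z. 1 / (l1 + bd (Im z))) \<in> gen_algebra generators"
  by (simp_all add: gen_algebra.gen generators_def)

lemma x3d_in_gen_algebra: "(\<lambda>z. x3d (Im z)) \<in> gen_algebra generators"
proof -
  have "(\<lambda>z. (l1 * l2 * K) * (1 / (l1 + bd (Im z)))) \<in> gen_algebra generators"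
    by (intro gen_algebra_intros generators_in_gen_algebra)
  then show ?thesis by (simp add: x3d_eq)
qed

lemma bdd_in_gen_algebra: "(\<lambda>z. bdd (Im z)) \<in> gen_algebra generators"
  unfolding bdd_def by (intro gen_algebra_intros generators_in_gen_algebra)

lemma generators_Im_deriv:
  "DERIV (\<lambda>v. sin (x3 v)) v :> cos (x3 v) * x3d v"
  "DERIV (\<lambda>v. cos (x3 v)) v :> - sin (x3 v) * x3d v"
  "DERIV (\<lambda>v. sin (b v)) v :> cos (b v) * bd v"
  "DERIV (\<lambda>v. cos (b v)) v :> - sin (b v) * bd v"
  "DERIV (\<lambda>v. 1 / (l1 + bd v)) v :> - bdd v * (1 / (l1 + bd v) * (1 / (l1 + bd v)))"
  using l1_plus_bd_pos[of v]
  by (auto intro!: derivative_eq_intros x3_deriv b_deriv bd_deriv simp: field_simps)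

lemma generators_Im_deriv_in_gen_algebra:
  "(\<lambda>z. cos (x3 (Im z)) * x3d (Im z)) \<in> gen_algebra generators"
  "(\<lambda>z. - sin (x3 (Im z)) * x3d (Im z)) \<in> gen_algebra generators"
  "(\<lambda>z. cos (b (Im z)) * bd (Im z)) \<in> gen_algebra generators"
  "(\<lambda>z. - sin (b (Im z)) * bd (Im z)) \<in> gen_algebra generators"
  "(\<lambda>z. - bdd (Im z) * (1 / (l1 + bd (Im z)) * (1 / (l1 + bd (Im z))))) \<in> gen_algebra generators"
  by (intro gen_algebra_intros generators_in_gen_algebra x3d_in_gen_algebra bdd_in_gen_algebra)+

lemma partials_closed_generators: "partials_closed generators"
  unfolding partials_closed_def
proof
  fix g assume "g \<in> generators"
  then consider "g = sh" | "g = ch" | "g = (\<lambda>z. x3 (Im z))" | "g = (\<lambda>z. sin (x3 (Im z)))"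
    | "g = (\<lambda>z. cos (x3 (Im z)))" | "g = (\<lambda>z. sin (b (Im z)))" | "g = (\<lambda>z. cos (b (Im z)))"
    | "g = (\<lambda>z. bd (Im z))" | "g = (\<lambda>z. 1 / (l1 + bd (Im z)))"
    unfolding generators_def by blast
  then show "\<exists>gu gv. gu \<in> gen_algebra generators \<and> gv \<in> gen_algebra generators \<and> has_partials g gu gv"
  proof cases
    case 1
    moreover have "(\<lambda>z. - l1 * ch z) \<in> gen_algebra generators" "(\<lambda>z. 0) \<in> gen_algebra generators"
      by (intro gen_algebra_intros generators_in_gen_algebra)+
    ultimately show ?thesis using has_partials_sh by blast
  next
    case 2
    moreover have "(\<lambda>z. - l1 * sh z) \<in> gen_algebra generators" "(\<lambda>z. 0) \<in> gen_algebra generators"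
      by (intro gen_algebra_intros generators_in_gen_algebra)+
    ultimately show ?thesis using has_partials_ch by blast
  next
    case 3
    show ?thesis unfolding 3 by (rule partials_closed_Im_comp[OF x3_deriv x3d_in_gen_algebra])
  next
    case 4
    show ?thesis unfolding 4
      by (rule partials_closed_Im_comp[OF generators_Im_deriv(1) generators_Im_deriv_in_gen_algebra(1)])
  next
    case 5
    show ?thesis unfolding 5
      by (rule partials_closed_Im_comp[OF generators_Im_deriv(2) generators_Im_deriv_in_gen_algebra(2)])
  next
    case 6
    show ?thesis unfolding 6
      by (rule partials_closed_Im_comp[OF generators_Im_deriv(3) generators_Im_deriv_in_gen_algebra(3)])
  next
    case 7
    show ?thesis unfolding 7
      by (rule partials_closed_Im_comp[OF generators_Im_deriv(4) generators_Im_deriv_in_gen_algebra(4)])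
  next
    case 8
    show ?thesis unfolding 8 by (rule partials_closed_Im_comp[OF bd_deriv bdd_in_gen_algebra])
  next
    case 9
    show ?thesis unfolding 9
      by (rule partials_closed_Im_comp[OF generators_Im_deriv(5) generators_Im_deriv_in_gen_algebra(5)])
  qed
qed

lemma surf_nth_in_gen_algebra: "(\<lambda>z. surf z $ k) \<in> gen_algebra generators"
proof -
  have p: "(\<lambda>z. p1 (Im z)) \<in> gen_algebra generators" "(\<lambda>z. p2 (Im z)) \<in> gen_algebra generators"
  proof -
    have "(\<lambda>z. x3d (Im z) * sin (b (Im z)) * (1 / (l1^3 * l2))) \<in> gen_algebra generators"
      "(\<lambda>z. - x3d (Im z) * cos (b (Im z)) * (1 / (l1^2 * l2^2))) \<in> gen_algebra generators"
      by (intro gen_algebra_intros generators_in_gen_algebra x3d_in_gen_algebra)+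
    then show "(\<lambda>z. p1 (Im z)) \<in> gen_algebra generators" "(\<lambda>z. p2 (Im z)) \<in> gen_algebra generators"
      by (simp_all add: p1_def p2_def)
  qed
  have "(\<lambda>z. cos (x3 (Im z)) * (sh z * p1 (Im z)) - sin (x3 (Im z)) * (sh z * p2 (Im z)))
      \<in> gen_algebra generators"
    "(\<lambda>z. sin (x3 (Im z)) * (sh z * p1 (Im z)) + cos (x3 (Im z)) * (sh z * p2 (Im z)))
      \<in> gen_algebra generators"
    by (intro gen_algebra_intros generators_in_gen_algebra p)+
  then show ?thesis
    using exhaust_3[of k] generators_in_gen_algebra(3) by (auto simp: surf_def)
qed

lemma inj_surf_derivative: "inj (\<lambda>w. Re w *\<^sub>R surf_u z + Im w *\<^sub>R surf_v z)"
proof (rule injI)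
  fix x y :: complex
  assume xy: "Re x *\<^sub>R surf_u z + Im x *\<^sub>R surf_v z = Re y *\<^sub>R surf_u z + Im y *\<^sub>R surf_v z"
  define a1 a2 where "a1 = - l1 * ch z * p1 (Im z)" and "a2 = - l1 * ch z * p2 (Im z)"
  have D: "Re w *\<^sub>R surf_u z + Im w *\<^sub>R surf_v z = frame_vec (x3 (Im z))
      (Re w * a1 + Im w * (sh z * q1 (Im z))) (Re w * a2 + Im w * (sh z * q2 (Im z)))
      (Im w * x3d (Im z))" for w
    by (simp add: surf_u_def surf_v_def frame_vec_scaleR frame_vec_add a1_def a2_def)
  from xy have e: "Re x * a1 + Im x * (sh z * q1 (Im z)) = Re y * a1 + Im y * (sh z * q1 (Im z))"
    "Re x * a2 + Im x * (sh z * q2 (Im z)) = Re y * a2 + Im y * (sh z * q2 (Im z))"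
    "Im x * x3d (Im z) = Im y * x3d (Im z)"
    unfolding D frame_vec_eq_iff by auto
  have im: "Im x = Im y" using e(3) x3d_nonzero by simp
  have "a1 \<noteq> 0 \<or> a2 \<noteq> 0"
  proof (rule ccontr)
    assume "\<not> (a1 \<noteq> 0 \<or> a2 \<noteq> 0)"
    then have "sin (b (Im z)) = 0" "cos (b (Im z)) = 0"
      using ch_pos[of z] x3d_nonzero[of "Im z"] l1_nonzero l2_nonzero
      by (auto simp: a1_def a2_def p1_def p2_def)
    then show False using sin_cos_squared_add[of "b (Im z)"] by simp
  qed
  then have "Re x = Re y" using e im by auto
  with im show "x = y" by (simp add: complex_eq_iff)
qed

lemma immersion_surf: "immersion surf"
  unfolding immersion_def
  using gen_algebra_smooth_map[OF partials_closed_generators surf_nth_in_gen_algebra]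
    surf_has_derivative inj_surf_derivative
  by blast

definition normal :: "complex \<Rightarrow> real^3" where
  "normal z = frame_vec (x3 (Im z)) (cos (b (Im z)) / (l1 * ch z)) (sin (b (Im z)) / (l2 * ch z))
     (- (l1 * l2) * sh z / ch z)"

lemma continuous_on_normal: "continuous_on UNIV normal"
proof -
  have "continuous_on UNIV (\<lambda>z. x3 (Im z))" "continuous_on UNIV (\<lambda>z. b (Im z))"
    "continuous_on UNIV sh" "continuous_on UNIV ch"
    using has_partials_x3 has_partials_Im_comp[OF b_deriv] has_partials_sh has_partials_ch
    by (auto intro: has_partials_continuous_on)
  then show ?thesis
    unfolding normal_def[abs_def] frame_vec_eq_sum
    by (intro continuous_intros) (auto simp: l1_nonzero l2_nonzero ch_nonzero)
qed

lemma unit_normal_surf: "unit_normal l1 l2 surf normal"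
  unfolding unit_normal_def
proof (intro conjI allI continuous_on_normal)
  fix z
  note ch = ch_nonzero[of z]
  show "ginner l1 l2 (surf z) (normal z) (normal z) = 1"
    unfolding normal_def ginner_frame_vec[OF surf_nth3]
    using ch_square[of z] sin_cos_squared_add[of "b (Im z)"] ch l1_nonzero l2_nonzero
    by (simp add: field_simps; algebra)
  show "ginner l1 l2 (surf z) (normal z) (pd surf 1 z) = 0"
    unfolding normal_def pd_surf surf_u_def ginner_frame_vec[OF surf_nth3] p1_def p2_def
    using ch l1_nonzero l2_nonzero
    by (simp add: field_simps; simp add: algebra_simps eval_nat_numeral)
  show "ginner l1 l2 (surf z) (normal z) (pd surf \<i> z) = 0"
    unfolding normal_def pd_surf surf_v_def ginner_frame_vec[OF surf_nth3] q1_def q2_def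
    using ch l1_nonzero l2_nonzero sin_cos_squared_add[of "b (Im z)"]
    by (simp add: field_simps; algebra)
qed

lemma normal_comp_surf:
  "normal_comp l1 l2 surf normal 1 z = cos (b (Im z)) / ch z"
  "normal_comp l1 l2 surf normal 2 z = sin (b (Im z)) / ch z"
  "normal_comp l1 l2 surf normal 3 z = - sh z / ch z"
  unfolding normal_comp_def frameE_eq_frame_vec surf_nth3 normal_def ginner_frame_vec[OF surf_nth3]
  using ch_pos[of z] l1_nonzero l2_nonzero by (simp_all add: field_simps power2_eq_square)

lemma gauss_map_surf:
  "1 + normal_comp l1 l2 surf normal 3 z \<noteq> 0 \<and>
   gauss_map l1 l2 surf normal z = of_real (exp (- l1 * Re z)) * cis (b (Im z))"
proof -
  have ch: "ch z > 0" by (rule ch_pos)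
  have "ch z - sh z = exp (l1 * Re z)"
    unfolding ch_def sh_def using cosh_minus_sinh[of "- l1 * Re z"] by simp
  then have denom: "1 + normal_comp l1 l2 surf normal 3 z = exp (l1 * Re z) / ch z"
    using ch by (simp add: normal_comp_surf field_simps)
  have "Complex (cos (b (Im z)) / ch z) (sin (b (Im z)) / ch z) = of_real (1 / ch z) * cis (b (Im z))"
    by (simp add: complex_eq_iff)
  then have "gauss_map l1 l2 surf normal z =
      of_real (1 / ch z) * cis (b (Im z)) / of_real (exp (l1 * Re z) / ch z)"
    unfolding gauss_map_def denom by (simp add: normal_comp_surf)
  also have "\<dots> = of_real (exp (- l1 * Re z)) * cis (b (Im z))"
    using ch by (simp add: field_simps exp_minus of_real_divide)
  finally show ?thesis using denom ch by simp
qed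

end

theorem theorem4p1:
  fixes l1 l2 K :: real and b x3 :: "real \<Rightarrow> real"
  assumes lam: "(l1 > l2 \<and> l2 > 0) \<or> (l1 = 1 \<and> l2 = 1)"
    and K: "K \<noteq> 0" "\<bar>K\<bar> < 1"
    and b: "\<forall>v. (b has_real_derivative bprime l1 l2 K b v) (at v)" "b 0 = 0"
    and x3: "\<forall>v. (x3 has_real_derivative x3prime l1 l2 K b v) (at v)" "x3 0 = 0"
  shows "conformal_minimal_immersion l1 l2 (surfX l1 l2 K b x3) \<and>
         (\<exists>N. unit_normal l1 l2 (surfX l1 l2 K b x3) N \<and>
              (\<forall>z. 1 + normal_comp l1 l2 (surfX l1 l2 K b x3) N 3 z \<noteq> 0 \<and>
                   gauss_map l1 l2 (surfX l1 l2 K b x3) N z =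
                     of_real (exp (- l1 * Re z)) * cis (b (Im z))))"
proof -
  interpret surf_data l1 l2 K b x3
    using lam K b(1) x3(1) by unfold_locales auto
  show ?thesis
    unfolding surfX_eq conformal_minimal_immersion_def
    using immersion_surf conformal_surf minimal_surf unit_normal_surf gauss_map_surf by blast
qed

end
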